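(* For every integer $g\ge1$, the number of reflective numerical semigroups of genus $g$ equals $g+1-\tau(g)$, where $\tau(g)$ is the number of positive divisors of $g$.
   Context: A numerical semigroup is a submonoid $S$ of $(\mathbb{N}_0,+)$ with finite complement; its genus is the number of elements of $\mathbb{N}_0\setminus S$. A numerical semigroup $S$ of genus $g\ge1$ is called reflective if for every $z\in\{0,1,\dots,g-1\}$ exactly one of $z$ and $z+g$ belongs to $S$. *)

theory Defs
  imports Main
begin

definition numerical_semigroup :: "nat set \<Rightarrow> bool" where
  "numerical_semigroup S \<longleftrightarrow>
     0 \<in> S \<and> (\<forall>a\<in>S. \<forall>b\<in>S. a + b \<in> S) \<and> finite (UNIV - S)"

definition genus :: "nat set \<Rightarrow> nat" where
  "genus S = card (UNIV - S)"

definition reflective :: "nat set \<Rightarrow> bool" where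
  "reflective S \<longleftrightarrow> numerical_semigroup S \<and> genus S \<ge> 1 \<and>
     (\<forall>z < genus S. (z \<in> S) \<noteq> (z + genus S \<in> S))"

end

theory Submission
  imports Defs
begin

text \<open>In a reflective numerical semigroup S of genus g, exactly one of z and z + g is a gap for each
  z < g; since there are only g gaps, every x \<ge> 2g lies in S. The elements of S below g are
  closed under sums and differences, so they are the multiples of some d \<le> g, and S is determined
  by d: its part in [g, 2g) is the shifted complement. Conversely this set is closed under addition
  unless d is a proper divisor of g, in which case d + (g - d) = g would be a gap. Hence the
  reflective semigroups correspond to the g - (\<tau>(g) - 1) numbers d \<in> {1..g} that are g or do not
  divide g.\<close>

definition reflective_semigroup_of :: "nat \<Rightarrow> nat \<Rightarrow> nat set" where
  "reflective_semigroup_of g d =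
     {x. x < g \<and> d dvd x} \<union> {x. g \<le> x \<and> x < 2 * g \<and> \<not> d dvd (x - g)} \<union> {x. 2 * g \<le> x}"

definition reflective_moduli :: "nat \<Rightarrow> nat set" where
  "reflective_moduli g = {d \<in> {1..g}. d = g \<or> \<not> d dvd g}"

lemma card_reflect_image:
  "card ((\<lambda>z. if P z then z + g else z) ` {..<g::nat}) = g"
proof -
  have "inj_on (\<lambda>z. if P z then z + g else z) {..<g}"
    by (auto simp: inj_on_def split: if_splits)
  then show ?thesis
    by (metis card_image card_lessThan)
qed

lemma multiples_below_eqD:
  fixes d1 d2 g :: nat
  assumes "0 < d1" "d1 \<le> g" "0 < d2" "d2 \<le> g"
    and eq: "{x. x < g \<and> d1 dvd x} = {x. x < g \<and> d2 dvd x}"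
  shows "d1 = d2"
proof -
  have "\<not> d < d'" if "0 < d" "0 < d'" "d' \<le> g" "{x. x < g \<and> d dvd x} = {x. x < g \<and> d' dvd x}"
    for d d' :: nat
  proof
    assume "d < d'"
    with that have "d' dvd d"
      by (metis (mono_tags, lifting) dvd_refl less_le_trans mem_Collect_eq)
    with \<open>0 < d\<close> \<open>d < d'\<close> show False
      by (simp add: dvd_imp_le leD)
  qed
  with assms show ?thesis
    by (metis linorder_neqE_nat)
qed

lemma closed_below_eq_multiples:
  fixes A :: "nat set"
  assumes "A \<subseteq> {..<g}" "0 \<in> A" "0 < g"
    and add: "\<And>a b. a \<in> A \<Longrightarrow> b \<in> A \<Longrightarrow> a + b < g \<Longrightarrow> a + b \<in> A"
    and diff: "\<And>a b. a \<in> A \<Longrightarrow> b \<in> A \<Longrightarrow> a \<le> b \<Longrightarrow> b - a \<in> A"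
  obtains d where "0 < d" "d \<le> g" "A = {x. x < g \<and> d dvd x}"
proof (cases "\<exists>a\<in>A. 0 < a")
  case False
  with assms have "A = {x. x < g \<and> g dvd x}"
    by (auto dest: dvd_imp_le)
  with \<open>0 < g\<close> that show ?thesis
    by blast
next
  case True
  define d where "d = (LEAST a. a \<in> A \<and> 0 < a)"
  have d: "d \<in> A" "0 < d"
    using LeastI_ex[of "\<lambda>a. a \<in> A \<and> 0 < a"] True by (auto simp: d_def)
  have d_min: "d \<le> a" if "a \<in> A" "0 < a" for a
    using that by (simp add: d_def Least_le)
  have multiple_mem: "k * d \<in> A" if "k * d < g" for k
    using that
  proof (induction k)
    case 0
    then show ?case using \<open>0 \<in> A\<close> by simp
  next
    case (Suc k)
    then show ?case
      using add[of "k * d" d] d(1) by (simp add: add.commute)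
  qed
  have mem_dvd: "d dvd a" if "a \<in> A" for a
    using that
  proof (induction a rule: less_induct)
    case (less a)
    show ?case
    proof (cases "a < d")
      case True
      with d_min less.prems show ?thesis
        by (metis dvd_0_right not_gr0 not_le)
    next
      case False
      with less d have "d dvd a - d"
        using diff by simp
      with False show ?thesis
        by (metis dvd_add dvd_refl le_add_diff_inverse2 not_less)
    qed
  qed
  have "A = {x. x < g \<and> d dvd x}"
    using assms(1) mem_dvd multiple_mem by (auto elim!: dvdE simp: mult.commute)
  moreover have "d \<le> g"
    using d assms(1) by auto
  ultimately show ?thesis
    using that d by blast
qed

lemma gaps_reflective_semigroup_of:
  "UNIV - reflective_semigroup_of g d = (\<lambda>z. if d dvd z then z + g else z) ` {..<g}"
proof (rule set_eqI, rule iffI)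
  fix x
  assume "x \<in> UNIV - reflective_semigroup_of g d"
  then consider "x < g" "\<not> d dvd x" | "g \<le> x" "x < 2 * g" "d dvd x - g"
    by (cases "x < g") (auto simp: reflective_semigroup_of_def)
  then show "x \<in> (\<lambda>z. if d dvd z then z + g else z) ` {..<g}"
  proof cases
    case 1
    then show ?thesis by (intro image_eqI[of _ _ x]) auto
  next
    case 2
    then show ?thesis by (intro image_eqI[of _ _ "x - g"]) auto
  qed
qed (auto simp: reflective_semigroup_of_def)

lemma reflective_semigroup_of_add_closed:
  assumes d: "d \<in> reflective_moduli g"
    and a: "a \<in> reflective_semigroup_of g d" and b: "b \<in> reflective_semigroup_of g d"
  shows "a + b \<in> reflective_semigroup_of g d"
proof -
  consider "2 * g \<le> a + b" | "a < g" "b < g"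
    | "a < g" "g \<le> b" "a + b < 2 * g" | "b < g" "g \<le> a" "a + b < 2 * g"
    by linarith
  then show ?thesis
  proof cases
    case 1
    then show ?thesis by (simp add: reflective_semigroup_of_def)
  next
    case 2
    then have da: "d dvd a" and db: "d dvd b"
      using a b by (auto simp: reflective_semigroup_of_def)
    show ?thesis
    proof (cases "a + b < g")
      case True
      then show ?thesis using da db by (simp add: reflective_semigroup_of_def)
    next
      case False
      have "\<not> d dvd a + b - g"
      proof
        assume "d dvd a + b - g"
        with False da db have "d dvd g"
          by (metis diff_diff_cancel dvd_add dvd_diff_nat not_le_imp_less less_imp_le_nat)
        with d have "d = g"
          by (simp add: reflective_moduli_def)
        with 2 da db have "a = 0" "b = 0"
          by (auto dest: dvd_imp_le intro: ccontr)
        with False 2 show False by simp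
      qed
      with False 2 show ?thesis by (simp add: reflective_semigroup_of_def)
    qed
  next
    case 3
    then have "d dvd a" "\<not> d dvd b - g" "a + b - g = a + (b - g)"
      using a b by (auto simp: reflective_semigroup_of_def)
    then have "\<not> d dvd a + b - g"
      by (simp add: dvd_add_right_iff)
    with 3 show ?thesis by (simp add: reflective_semigroup_of_def)
  next
    case 4
    then have "d dvd b" "\<not> d dvd a - g" "a + b - g = b + (a - g)"
      using a b by (auto simp: reflective_semigroup_of_def)
    then have "\<not> d dvd a + b - g"
      by (simp add: dvd_add_right_iff)
    with 4 show ?thesis by (simp add: reflective_semigroup_of_def)
  qed
qed

lemma reflective_semigroup_of_is_reflective:
  assumes d: "d \<in> reflective_moduli g"
  shows "numerical_semigroup (reflective_semigroup_of g d)"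
    and "genus (reflective_semigroup_of g d) = g"
    and "reflective (reflective_semigroup_of g d)"
proof -
  have "1 \<le> g"
    using d by (simp add: reflective_moduli_def)
  show ns: "numerical_semigroup (reflective_semigroup_of g d)"
    unfolding numerical_semigroup_def gaps_reflective_semigroup_of
    using \<open>1 \<le> g\<close> reflective_semigroup_of_add_closed[OF d]
    by (simp add: reflective_semigroup_of_def)
  show genus: "genus (reflective_semigroup_of g d) = g"
    unfolding genus_def gaps_reflective_semigroup_of by (rule card_reflect_image)
  have "\<forall>z < g. (z \<in> reflective_semigroup_of g d) \<noteq> (z + g \<in> reflective_semigroup_of g d)"
    by (auto simp: reflective_semigroup_of_def)
  with ns genus \<open>1 \<le> g\<close> show "reflective (reflective_semigroup_of g d)"
    by (simp add: reflective_def)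
qed

lemma reflective_semigroup_of_below:
  "reflective_semigroup_of g d \<inter> {..<g} = {x. x < g \<and> d dvd x}"
  by (auto simp: reflective_semigroup_of_def)

lemma inj_on_reflective_semigroup_of: "inj_on (reflective_semigroup_of g) (reflective_moduli g)"
proof (rule inj_onI)
  fix d1 d2
  assume "d1 \<in> reflective_moduli g" "d2 \<in> reflective_moduli g"
    and "reflective_semigroup_of g d1 = reflective_semigroup_of g d2"
  moreover from this(3) have "{x. x < g \<and> d1 dvd x} = {x. x < g \<and> d2 dvd x}"
    by (metis reflective_semigroup_of_below)
  ultimately show "d1 = d2"
    by (intro multiples_below_eqD[of d1 g d2]) (auto simp: reflective_moduli_def)
qed

lemma reflective_gaps:
  assumes "reflective S"
  shows "UNIV - S = (\<lambda>z. if z \<in> S then z + genus S else z) ` {..<genus S}"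
proof -
  have "finite (UNIV - S)"
    using assms by (simp add: reflective_def numerical_semigroup_def)
  moreover have "(\<lambda>z. if z \<in> S then z + genus S else z) ` {..<genus S} \<subseteq> UNIV - S"
    using assms by (auto simp: reflective_def)
  moreover have "card ((\<lambda>z. if z \<in> S then z + genus S else z) ` {..<genus S}) = card (UNIV - S)"
    by (metis card_reflect_image genus_def)
  ultimately show ?thesis
    by (metis card_subset_eq)
qed

lemma reflective_mem_if_ge:
  assumes "reflective S" "2 * genus S \<le> x"
  shows "x \<in> S"
proof (rule ccontr)
  assume "x \<notin> S"
  then obtain z where "z < genus S" "x = (if z \<in> S then z + genus S else z)"
    using reflective_gaps[OF assms(1)] by blast
  with assms(2) show False
    by (simp split: if_splits)
qed

lemma reflective_diff_mem:
  assumes r: "reflective S" and "a \<in> S" "b \<in> S" "a \<le> b" "b < genus S"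
  shows "b - a \<in> S"
proof (rule ccontr)
  have add: "\<And>a b. a \<in> S \<Longrightarrow> b \<in> S \<Longrightarrow> a + b \<in> S"
    and mirror: "\<And>z. z < genus S \<Longrightarrow> (z \<in> S) \<noteq> (z + genus S \<in> S)"
    using r by (simp_all add: reflective_def numerical_semigroup_def)
  assume "b - a \<notin> S"
  then have "b - a + genus S \<in> S"
    using mirror[of "b - a"] \<open>b < genus S\<close> by auto
  then have "a + (b - a + genus S) \<in> S"
    using add \<open>a \<in> S\<close> by blast
  then have "b + genus S \<in> S"
    using \<open>a \<le> b\<close> by simp
  with mirror[of b] \<open>b \<in> S\<close> \<open>b < genus S\<close> show False
    by simp
qed

lemma reflective_below_genus:
  assumes r: "reflective S"
  obtains d where "0 < d" "d \<le> genus S" "S \<inter> {..<genus S} = {x. x < genus S \<and> d dvd x}"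
proof (rule closed_below_eq_multiples[of "S \<inter> {..<genus S}" "genus S"])
  show "a + b \<in> S \<inter> {..<genus S}"
    if "a \<in> S \<inter> {..<genus S}" "b \<in> S \<inter> {..<genus S}" "a + b < genus S" for a b
    using r that unfolding reflective_def numerical_semigroup_def by blast
  show "b - a \<in> S \<inter> {..<genus S}"
    if "a \<in> S \<inter> {..<genus S}" "b \<in> S \<inter> {..<genus S}" "a \<le> b" for a b
    using reflective_diff_mem[OF r, of a b] that by auto
qed (use r that in \<open>auto simp: reflective_def numerical_semigroup_def\<close>)

lemma reflective_eq_reflective_semigroup_of:
  assumes r: "reflective S"
  obtains d where "d \<in> reflective_moduli (genus S)" "S = reflective_semigroup_of (genus S) d"
proof -
  let ?g = "genus S"
  have "0 \<in> S" and add: "\<And>a b. a \<in> S \<Longrightarrow> b \<in> S \<Longrightarrow> a + b \<in> S" and "0 < ?g"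
    and mirror: "\<And>z. z < ?g \<Longrightarrow> (z \<in> S) \<noteq> (z + ?g \<in> S)"
    using r by (auto simp: reflective_def numerical_semigroup_def)
  obtain d where "0 < d" "d \<le> ?g" and below: "S \<inter> {..<?g} = {x. x < ?g \<and> d dvd x}"
    using reflective_below_genus[OF r] .
  have low: "x \<in> S \<longleftrightarrow> d dvd x" if "x < ?g" for x
    using below that by blast
  have "d \<in> reflective_moduli ?g"
  proof (rule ccontr)
    assume "d \<notin> reflective_moduli ?g"
    with \<open>0 < d\<close> \<open>d \<le> ?g\<close> have "d < ?g" "d dvd ?g"
      by (auto simp: reflective_moduli_def)
    then have "d \<in> S" "?g - d \<in> S"
      using low \<open>0 < d\<close> by (simp_all add: dvd_diff_nat)
    then have "d + (?g - d) \<in> S"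
      by (rule add)
    with \<open>d < ?g\<close> mirror[of 0] \<open>0 \<in> S\<close> \<open>0 < ?g\<close> show False
      by simp
  qed
  moreover have "S = reflective_semigroup_of ?g d"
  proof (rule set_eqI)
    fix x
    consider "x < ?g" | "?g \<le> x" "x < 2 * ?g" | "2 * ?g \<le> x"
      by linarith
    then show "x \<in> S \<longleftrightarrow> x \<in> reflective_semigroup_of ?g d"
    proof cases
      case 1
      then show ?thesis using low by (simp add: reflective_semigroup_of_def)
    next
      case 2
      then have "x \<in> S \<longleftrightarrow> \<not> d dvd x - ?g"
        using mirror[of "x - ?g"] low[of "x - ?g"] by simp
      with 2 show ?thesis by (simp add: reflective_semigroup_of_def)
    next
      case 3
      then show ?thesis
        using reflective_mem_if_ge[OF r] by (simp add: reflective_semigroup_of_def)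
    qed
  qed
  ultimately show ?thesis
    using that by blast
qed

lemma card_reflective_moduli:
  assumes "1 \<le> g"
  shows "int (card (reflective_moduli g)) = int g + 1 - int (card {d. d dvd g})"
proof -
  have proper: "{d. d dvd g} - {g} \<subseteq> {1..g}"
    using assms by (auto dest: dvd_imp_le intro: ccontr)
  have "reflective_moduli g = {1..g} - ({d. d dvd g} - {g})"
    by (auto simp: reflective_moduli_def)
  moreover have "finite {d. d dvd g}" "g \<in> {d. d dvd g}"
    using assms by auto
  moreover from this have "0 < card {d. d dvd g}"
    by (auto simp: card_gt_0_iff)
  moreover have "card ({d. d dvd g} - {g}) \<le> g"
    using card_mono[OF _ proper] by simp
  ultimately show ?thesis
    using card_Diff_subset[OF _ proper] by simp
qed

theorem mainTheorem15:
  fixes g :: nat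
  assumes "g \<ge> 1"
  shows "int (card {S. numerical_semigroup S \<and> genus S = g \<and> reflective S})
           = int g + 1 - int (card {d. d dvd g})"
proof -
  let ?R = "{S. numerical_semigroup S \<and> genus S = g \<and> reflective S}"
  have "?R = reflective_semigroup_of g ` reflective_moduli g"
  proof
    show "?R \<subseteq> reflective_semigroup_of g ` reflective_moduli g"
    proof
      fix S
      assume "S \<in> ?R"
      then obtain d where "d \<in> reflective_moduli g" "S = reflective_semigroup_of g d"
        by (auto elim: reflective_eq_reflective_semigroup_of)
      then show "S \<in> reflective_semigroup_of g ` reflective_moduli g"
        by blast
    qed
    show "reflective_semigroup_of g ` reflective_moduli g \<subseteq> ?R"
      using reflective_semigroup_of_is_reflective by blast
  qed
  then have "card ?R = card (reflective_moduli g)"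
    by (simp add: card_image inj_on_reflective_semigroup_of)
  with card_reflective_moduli[OF assms] show ?thesis
    by simp
qed

end
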